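(* Let $m \ge 1$ be an integer, let $N \ge 0$ and $s$ be integers with $0 \le s \le N$, and let $y \in (0,1)$, all held fixed. For real $n > 0$ let $\beta_n$ denote the Beta-Binomial distribution on $\{0,1,\ldots,m\}$ with probability mass function \[ p(l \mid y, n, m, s, N) = \binom{m}{l}\frac{B(l + ny + s,\; m - l + n(1-y) + N - s)}{B(ny + s,\; n(1-y) + N - s)}, \qquad l = 0,1,\ldots,m, \] where $B(\cdot,\cdot)$ is the Beta function. Let $0 < \underline{n} < \overline{n}$ and define, for $l \in \{0,\ldots,m\}$, \[ \mathcal{L}_{\overline{n},\underline{n}}(l) := \frac{p(l \mid y, \overline{n}, m, s, N)}{p(l \mid y, \underline{n}, m, s, N)}. \] Then: if $\mathcal{L}_{\overline{n},\underline{n}}(0) \le 1$ and $\mathcal{L}_{\overline{n},\underline{n}}(m) \ge 1$, then $\beta_{\overline{n}} \ge_{\mathrm{st}} \beta_{\underline{n}}$; and if $\mathcal{L}_{\overline{n},\underline{n}}(0) \ge 1$ and $\mathcal{L}_{\overline{n},\underline{n}}(m) \le 1$, then $\beta_{\overline{n}} \le_{\mathrm{st}} \beta_{\underline{n}}$.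
   Context: For two probability distributions $P, Q$ on $\{0,1,\ldots,m\}$, first-order stochastic dominance $P \ge_{\mathrm{st}} Q$ means $P(\{l' : l' > l\}) \ge Q(\{l' : l' > l\})$ for every $l$ (equivalently, the cumulative distribution function of $P$ is pointwise no larger than that of $Q$); $P \le_{\mathrm{st}} Q$ means $Q \ge_{\mathrm{st}} P$. *)

theory Defs
  imports "HOL-Analysis.Analysis"
begin

definition bb_pmf :: "real \<Rightarrow> real \<Rightarrow> nat \<Rightarrow> nat \<Rightarrow> nat \<Rightarrow> nat \<Rightarrow> real" where
  "bb_pmf y n m s N l =
     real (m choose l) * Beta (real l + n * y + real s) (real m - real l + n * (1 - y) + real N - real s)
       / Beta (n * y + real s) (n * (1 - y) + real N - real s)"

definition st_ge :: "nat \<Rightarrow> (nat \<Rightarrow> real) \<Rightarrow> (nat \<Rightarrow> real) \<Rightarrow> bool" where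
  "st_ge m P Q \<longleftrightarrow> (\<forall>l. (\<Sum>l'\<in>{l<..m}. P l') \<ge> (\<Sum>l'\<in>{l<..m}. Q l'))"

definition LR :: "real \<Rightarrow> nat \<Rightarrow> nat \<Rightarrow> nat \<Rightarrow> real \<Rightarrow> real \<Rightarrow> nat \<Rightarrow> real" where
  "LR y m s N nhi nlo l = bb_pmf y nhi m s N l / bb_pmf y nlo m s N l"

end

theory Submission
  imports Defs
begin

text \<open>
  By the Gamma-function recurrence the Beta-Binomial mass function is
  \<open>(m choose l) \<cdot> pochhammer a l \<cdot> pochhammer b (m - l) / pochhammer (a + b) m\<close>
  with \<open>a = n y + s\<close> and \<open>b = n (1 - y) + N - s\<close>, both increasing in \<open>n\<close>. The successive
  quotients of the likelihood ratio, \<open>L(l+1)/L(l) = (a' + l)/(a + l) \<cdot> (b + m - l - 1)/(b' + m - l - 1)\<close>, decrease in \<open>l\<close>,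
  so \<open>L\<close> is quasi-concave on \<open>{0..m}\<close>. If \<open>L(m) \<ge> 1\<close>, the set where \<open>L \<ge> 1\<close> is therefore an
  upper interval: the two mass functions cross only once, which together with equal total
  mass gives stochastic dominance.
\<close>

lemma Beta_add_of_nat:
  fixes a b :: real
  assumes "0 < a" "0 < b"
  shows "Beta (a + real i) (b + real j)
           = pochhammer a i * pochhammer b j / pochhammer (a + b) (i + j) * Beta a b"
proof -
  have not_nonpos_Int: "x \<notin> \<int>\<^sub>\<le>\<^sub>0" if "0 < x" for x :: real
    using that by (auto elim!: nonpos_Ints_cases)
  have Gamma_add: "Gamma (x + real k) = pochhammer x k * Gamma x" if "0 < x" for x :: real and k
    using pochhammer_Gamma [OF not_nonpos_Int [OF that], of k] Gamma_real_pos [OF that] by simp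
  have "Gamma (a + real i + (b + real j)) = pochhammer (a + b) (i + j) * Gamma (a + b)"
    using Gamma_add [of "a + b" "i + j"] assms by (simp add: ac_simps)
  moreover have "0 < pochhammer (a + b) (i + j)" "0 < Gamma (a + b)"
    using assms by (auto intro: pochhammer_pos)
  ultimately show ?thesis
    using assms unfolding Beta_def by (simp add: Gamma_add field_simps)
qed

definition beta_binomial :: "real \<Rightarrow> real \<Rightarrow> nat \<Rightarrow> nat \<Rightarrow> real" where
  "beta_binomial a b m l =
     real (m choose l) * pochhammer a l * pochhammer b (m - l) / pochhammer (a + b) m"

lemma bb_pmf_params_pos:
  assumes "0 < n" "0 < y" "y < 1" "s \<le> N"
  shows "0 < n * y + real s" "0 < n * (1 - y) + real N - real s"
proof -
  have "0 < n * y" "0 < n * (1 - y)" "real s \<le> real N"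
    using assms by simp_all
  then show "0 < n * y + real s" "0 < n * (1 - y) + real N - real s"
    by linarith+
qed

lemma bb_pmf_eq_beta_binomial:
  assumes "0 < n" "0 < y" "y < 1" "s \<le> N" "l \<le> m"
  shows "bb_pmf y n m s N l = beta_binomial (n * y + real s) (n * (1 - y) + real N - real s) m l"
proof -
  define a where "a = n * y + real s"
  define b where "b = n * (1 - y) + real N - real s"
  have "0 < a" "0 < b"
    using bb_pmf_params_pos assms unfolding a_def b_def by blast+
  moreover have "bb_pmf y n m s N l = real (m choose l) * Beta (a + real l) (b + real (m - l)) / Beta a b"
    using assms unfolding bb_pmf_def a_def b_def by (simp add: of_nat_diff algebra_simps)
  moreover have "Beta (a + real l) (b + real (m - l))
                   = pochhammer a l * pochhammer b (m - l) / pochhammer (a + b) m * Beta a b"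
    using Beta_add_of_nat [OF \<open>0 < a\<close> \<open>0 < b\<close>, of l "m - l"] assms by simp
  moreover have "0 < Beta a b"
    using \<open>0 < a\<close> \<open>0 < b\<close> by (simp add: Beta_def)
  ultimately show ?thesis
    unfolding beta_binomial_def a_def [symmetric] b_def [symmetric] by simp
qed

lemma beta_binomial_pos:
  assumes "0 < a" "0 < b" "l \<le> m"
  shows "0 < beta_binomial a b m l"
  using assms by (auto simp: beta_binomial_def intro!: divide_pos_pos mult_pos_pos pochhammer_pos)

lemma sum_beta_binomial:
  assumes "0 < a" "0 < b"
  shows "(\<Sum>l\<le>m. beta_binomial a b m l) = 1"
proof -
  have "0 < pochhammer (a + b) m"
    using assms by (intro pochhammer_pos) simp
  then show ?thesis
    unfolding beta_binomial_def
    by (simp add: sum_divide_distrib [symmetric] pochhammer_binomial_sum [symmetric])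
qed

lemma beta_binomial_Suc:
  assumes "l < m"
  shows "(b + real (m - Suc l)) * real (Suc l) * beta_binomial a b m (Suc l)
           = (a + real l) * real (m - l) * beta_binomial a b m l"
proof -
  define k where "k = m - Suc l"
  have m_minus_l: "m - l = Suc k"
    using assms by (simp add: k_def)
  have "Suc l * (m choose Suc l) = Suc k * (m choose l)"
    using Suc_times_binomial [of l "m - 1"] binomial_absorb_comp [of m l] assms
    by (simp add: k_def Suc_diff_Suc)
  then have "real (Suc l) * real (m choose Suc l) = real (Suc k) * real (m choose l)"
    by (metis of_nat_mult)
  then show ?thesis
    unfolding beta_binomial_def k_def [symmetric] m_minus_l pochhammer_Suc
    by (simp add: ac_simps)
qed

lemma add_divide_add_antimono:
  fixes a a' t t' :: real
  assumes "0 < a" "a \<le> a'" "0 \<le> t" "t \<le> t'"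
  shows "(a' + t') / (a + t') \<le> (a' + t) / (a + t)"
proof -
  have "a * (t' - t) \<le> a' * (t' - t)"
    using assms by (intro mult_right_mono) simp_all
  then have "a * t' + a' * t \<le> a * t + a' * t'"
    by (simp add: algebra_simps)
  then show ?thesis
    using assms by (simp add: divide_simps) (simp add: algebra_simps)
qed

lemma add_divide_add_mono:
  fixes a a' t t' :: real
  assumes "0 < a" "a \<le> a'" "0 \<le> t" "t \<le> t'"
  shows "(a + t) / (a' + t) \<le> (a + t') / (a' + t')"
  using le_imp_inverse_le [OF add_divide_add_antimono [OF assms]] assms by simp

lemma ratio_antimono_imp_quasiconcave:
  fixes L r :: "nat \<Rightarrow> real"
  assumes nonneg: "\<And>l. l \<le> m \<Longrightarrow> 0 \<le> L l"
    and L_Suc: "\<And>l. l < m \<Longrightarrow> L (Suc l) = r l * L l"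
    and antimono: "\<And>i j. i \<le> j \<Longrightarrow> j < m \<Longrightarrow> r j \<le> r i"
    and "i \<le> j" "j \<le> k" "k \<le> m"
  shows "min (L i) (L k) \<le> L j"
proof -
  consider "j = k" | "j < k" "r j < 1" | "j < k" "1 \<le> r j"
    using \<open>j \<le> k\<close> by linarith
  then show ?thesis
  proof cases
    case 1
    then show ?thesis by simp
  next
    case 2
    have "L k \<le> L j"
      using \<open>j \<le> k\<close>
    proof (induction k rule: dec_induct)
      case (step t)
      have "r t \<le> 1"
        using antimono [of j t] step.hyps \<open>r j < 1\<close> \<open>k \<le> m\<close> by simp
      then have "r t * L t \<le> L t"
        using mult_right_mono [of "r t" 1 "L t"] nonneg [of t] step.hyps \<open>k \<le> m\<close> by simp
      then show ?case
        using step.IH step.hyps \<open>k \<le> m\<close> by (simp add: L_Suc)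
    qed simp
    then show ?thesis
      by simp
  next
    case 3
    have "L i \<le> L j"
      using \<open>i \<le> j\<close>
    proof (induction j rule: dec_induct)
      case (step t)
      have "1 \<le> r t"
        using antimono [of t j] step.hyps \<open>1 \<le> r j\<close> \<open>j < k\<close> \<open>k \<le> m\<close> by simp
      then have "L t \<le> r t * L t"
        using mult_right_mono [of 1 "r t" "L t"] nonneg [of t] step.hyps \<open>j < k\<close> \<open>k \<le> m\<close> by simp
      then show ?case
        using step.IH step.hyps \<open>j < k\<close> \<open>k \<le> m\<close> by (simp add: L_Suc)
    qed simp
    then show ?thesis
      by simp
  qed
qed

lemma beta_binomial_ratio_quasiconcave:
  fixes a a' b b' :: real
  assumes "0 < a" "a \<le> a'" "0 < b" "b \<le> b'" "i \<le> j" "j \<le> k" "k \<le> m"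
  defines "L \<equiv> \<lambda>l. beta_binomial a' b' m l / beta_binomial a b m l"
  shows "min (L i) (L k) \<le> L j"
proof (rule ratio_antimono_imp_quasiconcave [where m = m])
  define r where "r l = (a' + real l) / (a + real l) * ((b + real (m - Suc l)) / (b' + real (m - Suc l)))"
    for l
  have pos: "0 < beta_binomial a b m l" "0 < beta_binomial a' b' m l" if "l \<le> m" for l
    using assms that by (simp_all add: beta_binomial_pos)
  show "0 \<le> L l" if "l \<le> m" for l
    using pos [OF that] by (simp add: L_def)
  show "L (Suc l) = r l * L l" if "l < m" for l
  proof -
    have ratio_Suc: "P1 / Q1 = \<alpha>' / \<alpha> * (c / c') * (P0 / Q0)"
      if "c' * v * P1 = \<alpha>' * u * P0" "c * v * Q1 = \<alpha> * u * Q0"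
        "0 < u" "0 < v" "0 < \<alpha>" "0 < c" "0 < c'" "0 < Q0"
      for P0 P1 Q0 Q1 \<alpha> \<alpha>' c c' u v :: real
    proof -
      have "P1 = \<alpha>' * u * P0 / (c' * v)" "Q1 = \<alpha> * u * Q0 / (c * v)"
        using that by (simp_all add: eq_divide_eq ac_simps)
      with that show ?thesis
        by (simp add: ac_simps)
    qed
    show ?thesis
      unfolding L_def r_def
      by (rule ratio_Suc [OF beta_binomial_Suc [OF that, of b' a'] beta_binomial_Suc [OF that, of b a]])
        (use assms that pos [of l] in simp_all)
  qed
  show "r j \<le> r i" if "i \<le> j" "j < m" for i j
    unfolding r_def
  proof (rule mult_mono)
    show "(a' + real j) / (a + real j) \<le> (a' + real i) / (a + real i)"
      using assms that by (intro add_divide_add_antimono) simp_all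
    show "(b + real (m - Suc j)) / (b' + real (m - Suc j)) \<le> (b + real (m - Suc i)) / (b' + real (m - Suc i))"
      using assms that by (intro add_divide_add_mono) simp_all
  qed (use assms in simp_all)
qed (use assms in simp_all)

lemma st_ge_if_single_crossing:
  fixes P Q :: "nat \<Rightarrow> real" and S :: "nat \<Rightarrow> bool"
  assumes total: "(\<Sum>l\<le>m. P l) = (\<Sum>l\<le>m. Q l)"
    and S_Suc: "\<And>l. l < m \<Longrightarrow> S l \<Longrightarrow> S (Suc l)"
    and above: "\<And>l. l \<le> m \<Longrightarrow> S l \<Longrightarrow> Q l \<le> P l"
    and below: "\<And>l. l \<le> m \<Longrightarrow> \<not> S l \<Longrightarrow> P l \<le> Q l"
  shows "st_ge m P Q"
  unfolding st_ge_def
proof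
  fix l
  have S_mono: "S j" if "S i" "i \<le> j" "j \<le> m" for i j
    using that(2,1,3) by (induction j rule: dec_induct) (auto intro: S_Suc)
  show "(\<Sum>l'\<in>{l<..m}. Q l') \<le> (\<Sum>l'\<in>{l<..m}. P l')"
  proof (cases "\<forall>j\<in>{l<..m}. S j")
    case True
    then show ?thesis
      by (intro sum_mono above) auto
  next
    case False
    then obtain j where j: "l < j" "j \<le> m" "\<not> S j"
      by auto
    have initial: "(\<Sum>i\<le>l. P i) \<le> (\<Sum>i\<le>l. Q i)"
      using S_mono [of _ j] j by (intro sum_mono below) force+
    have split: "(\<Sum>i\<le>m. f i) = (\<Sum>i\<le>l. f i) + (\<Sum>i\<in>{l<..m}. f i)" for f :: "nat \<Rightarrow> real"
      using j by (subst ivl_disj_un_one(3) [of l m, symmetric]) (auto intro: sum.union_disjoint)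
    show ?thesis
      using initial total split [of P] split [of Q] by linarith
  qed
qed

lemma st_ge_if_ratio_quasiconcave:
  fixes P Q :: "nat \<Rightarrow> real"
  assumes total: "(\<Sum>l\<le>m. P l) = (\<Sum>l\<le>m. Q l)"
    and Q_pos: "\<And>l. l \<le> m \<Longrightarrow> 0 < Q l"
    and quasiconcave: "\<And>i j k. i \<le> j \<Longrightarrow> j \<le> k \<Longrightarrow> k \<le> m \<Longrightarrow>
                         min (P i / Q i) (P k / Q k) \<le> P j / Q j"
  shows "1 \<le> P m / Q m \<Longrightarrow> st_ge m P Q"
    and "1 \<le> P 0 / Q 0 \<Longrightarrow> st_ge m Q P"
proof -
  assume last: "1 \<le> P m / Q m"
  show "st_ge m P Q"
  proof (rule st_ge_if_single_crossing [where S = "\<lambda>l. 1 \<le> P l / Q l"])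
    show "1 \<le> P (Suc l) / Q (Suc l)" if "l < m" "1 \<le> P l / Q l" for l
      using quasiconcave [of l "Suc l" m] last that by simp
  qed (use total Q_pos in \<open>auto simp: le_divide_eq not_le divide_less_eq\<close>)
next
  assume first: "1 \<le> P 0 / Q 0"
  show "st_ge m Q P"
  proof (rule st_ge_if_single_crossing [where S = "\<lambda>l. P l / Q l < 1"])
    show "P (Suc l) / Q (Suc l) < 1" if "l < m" "P l / Q l < 1" for l
      using quasiconcave [of 0 l "Suc l"] first that by (auto simp: min_def split: if_splits)
  qed (use total Q_pos in \<open>auto simp: le_divide_eq not_less divide_less_eq\<close>)
qed

theorem lemma1:
  fixes m s N :: nat and y nlo nhi :: real
  assumes "m \<ge> 1" and "s \<le> N" and "0 < y" and "y < 1"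
    and "0 < nlo" and "nlo < nhi"
  shows "(LR y m s N nhi nlo 0 \<le> 1 \<and> LR y m s N nhi nlo m \<ge> 1
            \<longrightarrow> st_ge m (bb_pmf y nhi m s N) (bb_pmf y nlo m s N))
       \<and> (LR y m s N nhi nlo 0 \<ge> 1 \<and> LR y m s N nhi nlo m \<le> 1
            \<longrightarrow> st_ge m (bb_pmf y nlo m s N) (bb_pmf y nhi m s N))"
  \<comment> \<open>Only \<open>L(m) \<ge> 1\<close> resp. \<open>L(0) \<ge> 1\<close> is needed.\<close>
proof -
  define a where "a n = n * y + real s" for n
  define b where "b n = n * (1 - y) + real N - real s" for n
  have pos: "0 < a n" "0 < b n" if "0 < n" for n
    using bb_pmf_params_pos [OF that assms(3,4,2)] unfolding a_def b_def by simp_all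
  have eq: "bb_pmf y n m s N l = beta_binomial (a n) (b n) m l" if "0 < n" "l \<le> m" for n l
    using bb_pmf_eq_beta_binomial [OF that(1) assms(3,4,2) that(2)] unfolding a_def b_def .
  have "a nlo \<le> a nhi" "b nlo \<le> b nhi"
    using assms by (simp_all add: a_def b_def mult_right_mono)
  have "0 < nhi"
    using assms by simp
  define P where "P = bb_pmf y nhi m s N"
  define Q where "Q = bb_pmf y nlo m s N"
  have "(\<Sum>l\<le>m. P l) = (\<Sum>l\<le>m. Q l)"
    using sum_beta_binomial pos \<open>0 < nhi\<close> \<open>0 < nlo\<close> by (simp add: P_def Q_def eq)
  moreover have "0 < Q l" if "l \<le> m" for l
    using beta_binomial_pos pos \<open>0 < nlo\<close> that by (simp add: Q_def eq)
  moreover have "min (P i / Q i) (P k / Q k) \<le> P j / Q j"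
    if "i \<le> j" "j \<le> k" "k \<le> m" for i j k
    using beta_binomial_ratio_quasiconcave [OF pos(1) \<open>a nlo \<le> a nhi\<close> pos(2) \<open>b nlo \<le> b nhi\<close> that]
      \<open>0 < nlo\<close> \<open>0 < nhi\<close> that by (simp add: P_def Q_def eq)
  ultimately show ?thesis
    using st_ge_if_ratio_quasiconcave [of P m Q] unfolding LR_def P_def Q_def by blast
qed

end
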